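(* Let $d>1$ and $a_n=1/n^d$ for all $n\in\mathbb{N}$. Let $\lambda=(\lambda_n)$ be complex numbers with $\operatorname{re}\lambda_n\le0$ for all $n$ and $\lim_{n\to\infty}\lambda_n/a_n=0$. Define $\beta_n:=\frac1n\sum_{m=1}^\infty\ln|1-\lambda_m/a_n|$. Then $\lim_{n\to\infty}\beta_n=0$. *)

theory Defs
  imports Complex_Main
begin

definition seq_a :: "real \<Rightarrow> nat \<Rightarrow> real" where
  "seq_a d n = 1 / (real n powr d)"

definition beta :: "real \<Rightarrow> (nat \<Rightarrow> complex) \<Rightarrow> nat \<Rightarrow> real" where
  "beta d lam n = (1 / real n) *
     (\<Sum>m. ln (cmod (1 - lam (Suc m) / complex_of_real (seq_a d n))))"

end

theory Submission
  imports Defs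
begin

text \<open>
  Put \<open>e k = |\<lambda> k| k^d\<close>, a null sequence. Since \<open>Re (\<lambda> k) \<le> 0\<close>, the \<open>k\<close>-th term of
  \<open>n \<beta> n\<close> lies between \<open>0\<close> and \<open>ln (1 + e k (n/k)^d)\<close>. For \<open>k > n\<close> use
  \<open>ln (1 + x) \<le> x\<close> and \<open>\<Sum>k>n. k^-d \<le> n^(1-d) / (d - 1)\<close>: the tail is at most
  \<open>(sup k>n. e k) n / (d - 1) = o(n)\<close>. For \<open>k \<le> n\<close> use \<open>ln (1 + x) \<le> 2d x^(1/(2d))\<close>,
  which turns \<open>(n/k)^d\<close> into \<open>sqrt (n/k)\<close>: the head is at most
  \<open>2d sqrt n \<Sum>k\<le>n. (e k)^(1/(2d)) / sqrt k\<close>, and this is \<open>o(n)\<close> because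
  \<open>\<Sum>k\<le>n. 1 / sqrt k \<le> 2 sqrt n\<close> while \<open>(e k)^(1/(2d)) \<rightarrow> 0\<close>.
\<close>

lemma one_plus_powr_le:
  fixes s x :: real
  assumes "0 < s" "s \<le> 1" "0 \<le> x"
  shows "(1 + x) powr s \<le> 1 + x powr s"
proof -
  define y where "y = 1 + x"
  have y: "y > 0" using assms by (simp add: y_def)
  have "1 = 1/y + x/y" using y by (simp add: y_def field_simps)
  also have "\<dots> \<le> (1/y) powr s + (x/y) powr s"
    using powr_mono'[of s 1 "1/y"] powr_mono'[of s 1 "x/y"] assms y
    by (intro add_mono) (auto simp: y_def field_simps)
  also have "\<dots> = (1 + x powr s) / y powr s"
    by (simp add: powr_divide add_divide_distrib)
  finally have "y powr s \<le> 1 + x powr s" using y by (simp add: field_simps)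
  then show ?thesis by (simp add: y_def)
qed

lemma ln_one_plus_le_powr:
  fixes s x :: real
  assumes "0 < s" "s \<le> 1" "0 \<le> x"
  shows "ln (1 + x) \<le> x powr s / s"
proof -
  have "s * ln (1 + x) = ln ((1 + x) powr s)" using assms by simp
  also have "\<dots> \<le> (1 + x) powr s - 1" by (rule ln_le_minus_one) (use assms in simp)
  also have "\<dots> \<le> x powr s" using one_plus_powr_le[OF assms] by simp
  finally show ?thesis using assms by (simp add: field_simps)
qed

lemma sum_inverse_sqrt_le: "(\<Sum>m<n. 1 / sqrt (real (Suc m))) \<le> 2 * sqrt (real n)"
proof (induction n)
  case 0
  then show ?case by simp
next
  case (Suc n)
  have "sqrt (real n) * sqrt (real n + 1) = sqrt (real n * (real n + 1))"
    by (simp add: real_sqrt_mult)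
  also have "\<dots> \<le> sqrt ((real n + 1/2)^2)"
    by (rule real_sqrt_le_mono) (simp add: power2_eq_square algebra_simps)
  finally have "1 \<le> (2 * sqrt (real n + 1) - 2 * sqrt (real n)) * sqrt (real n + 1)"
    by (simp add: algebra_simps)
  then have "1 / sqrt (real n + 1) \<le> 2 * sqrt (real n + 1) - 2 * sqrt (real n)"
    by (simp add: field_simps)
  with Suc show ?case by (simp add: add.commute)
qed

lemma inverse_powr_le_powr_diff:
  fixes d k :: real
  assumes "d > 1" "k \<ge> 1"
  shows "1 / (k + 1) powr d \<le> (k powr (1 - d) - (k + 1) powr (1 - d)) / (d - 1)"
proof -
  have deriv: "((\<lambda>x. x powr (1 - d)) has_real_derivative (1 - d) * x powr (1 - d - 1)) (at x)"
    if "k \<le> x" for x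
    using assms that by (intro has_real_derivative_powr) auto
  obtain z where z: "k < z" "z < k + 1"
    and mvt: "(k + 1) powr (1 - d) - k powr (1 - d) = ((k + 1) - k) * ((1 - d) * z powr (1 - d - 1))"
    using MVT2[of k "k + 1" "\<lambda>x. x powr (1 - d)", OF _ deriv] by auto
  have "(k powr (1 - d) - (k + 1) powr (1 - d)) / (d - 1) = z powr (-d)"
    using mvt assms by (simp add: field_simps)
  moreover have "(k + 1) powr (-d) \<le> z powr (-d)"
    using z assms by (intro powr_mono2') auto
  ultimately show ?thesis
    using assms by (simp add: powr_minus_divide)
qed

lemma
  fixes d :: real and n :: nat
  assumes "d > 1" "n \<ge> 1"
  shows summable_inverse_powr_tail: "summable (\<lambda>m. 1 / real (Suc (m + n)) powr d)"
    and suminf_inverse_powr_tail_le: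
      "(\<Sum>m. 1 / real (Suc (m + n)) powr d) \<le> real n powr (1 - d) / (d - 1)"
proof -
  define f where "f m = real (m + n) powr (1 - d) / (d - 1)" for m
  have "(\<lambda>m. real (m + n) powr (1 - d)) \<longlonglongrightarrow> 0"
    using assms
    by (intro tendsto_neg_powr filterlim_compose[OF filterlim_real_sequentially]
        filterlim_add_const_nat_at_top) auto
  then have "f \<longlonglongrightarrow> 0"
    unfolding f_def using tendsto_divide_zero by blast
  then have telescope: "(\<lambda>m. f m - f (Suc m)) sums f 0"
    using telescope_sums' by fastforce
  have le: "1 / real (Suc (m + n)) powr d \<le> f m - f (Suc m)" for m
    using inverse_powr_le_powr_diff[of d "real (m + n)"] assms
    by (simp add: f_def diff_divide_distrib add_ac)
  show summable: "summable (\<lambda>m. 1 / real (Suc (m + n)) powr d)"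
    by (rule summable_comparison_test'[OF sums_summable[OF telescope], of 0]) (use le in auto)
  show "(\<Sum>m. 1 / real (Suc (m + n)) powr d) \<le> real n powr (1 - d) / (d - 1)"
    using sums_le[OF le summable_sums[OF summable] telescope] by (simp add: f_def)
qed

lemma
  fixes w :: complex
  assumes "Re w \<le> 0"
  shows ln_norm_one_minus_nonneg: "0 \<le> ln (cmod (1 - w))"
    and ln_norm_one_minus_le: "ln (cmod (1 - w)) \<le> ln (1 + cmod w)"
proof -
  have "1 \<le> Re (1 - w)" using assms by simp
  also have "\<dots> \<le> cmod (1 - w)" by (rule complex_Re_le_cmod)
  finally have ge1: "1 \<le> cmod (1 - w)" .
  then show "0 \<le> ln (cmod (1 - w))" by simp
  show "ln (cmod (1 - w)) \<le> ln (1 + cmod w)"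
    using ge1 norm_triangle_ineq4[of 1 w] by (intro ln_mono) auto
qed

text \<open>With \<open>e k = \<bar>\<lambda>\<^sub>k\<bar> k\<^sup>d\<close> this majorizes \<open>ln \<bar>1 - \<lambda>\<^sub>k / a\<^sub>n\<bar>\<close>.\<close>
definition log_majorant :: "real \<Rightarrow> (nat \<Rightarrow> real) \<Rightarrow> nat \<Rightarrow> nat \<Rightarrow> real" where
  "log_majorant d e n k = ln (1 + e k * (real n / real k) powr d)"

lemma log_majorant_nonneg: "0 \<le> e k \<Longrightarrow> 0 \<le> log_majorant d e n k"
  by (simp add: log_majorant_def)

lemma
  fixes e :: "nat \<Rightarrow> real"
  assumes "d > 1" "n \<ge> 1" "\<And>k. k > n \<Longrightarrow> 0 \<le> e k \<and> e k \<le> \<delta>"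
  shows summable_log_majorant_tail: "summable (\<lambda>m. log_majorant d e n (Suc (m + n)))"
    and suminf_log_majorant_tail_le:
      "(\<Sum>m. log_majorant d e n (Suc (m + n))) \<le> \<delta> * real n / (d - 1)"
proof -
  let ?g = "\<lambda>m. \<delta> * real n powr d * (1 / real (Suc (m + n)) powr d)"
  have bounds: "0 \<le> log_majorant d e n (Suc (m + n))" "log_majorant d e n (Suc (m + n)) \<le> ?g m" for m
  proof -
    have e: "0 \<le> e (Suc (m + n))" "e (Suc (m + n)) \<le> \<delta>" using assms(3)[of "Suc (m + n)"] by auto
    then show "0 \<le> log_majorant d e n (Suc (m + n))"
      by (intro log_majorant_nonneg)
    have "log_majorant d e n (Suc (m + n)) \<le> e (Suc (m + n)) * (real n / real (Suc (m + n))) powr d"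
      unfolding log_majorant_def using e by (intro ln_add_one_self_le_self) simp
    also have "\<dots> \<le> ?g m"
      using e by (simp add: powr_divide divide_right_mono mult_right_mono)
    finally show "log_majorant d e n (Suc (m + n)) \<le> ?g m" .
  qed
  have g: "summable ?g"
    by (intro summable_mult summable_inverse_powr_tail assms)
  show summable: "summable (\<lambda>m. log_majorant d e n (Suc (m + n)))"
    by (rule summable_comparison_test'[OF g, of 0]) (use bounds in auto)
  have "(\<Sum>m. log_majorant d e n (Suc (m + n))) \<le> suminf ?g"
    by (rule suminf_le[OF bounds(2) summable g])
  also have "\<dots> = \<delta> * real n powr d * (\<Sum>m. 1 / real (Suc (m + n)) powr d)"
    by (intro suminf_mult summable_inverse_powr_tail assms)
  also have "\<dots> \<le> \<delta> * real n powr d * (real n powr (1 - d) / (d - 1))"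
    using assms(3)[of "Suc n"] suminf_inverse_powr_tail_le[OF assms(1,2)]
    by (intro mult_left_mono) auto
  also have "\<dots> = \<delta> * real n / (d - 1)"
    using assms(2) by (simp add: powr_add[symmetric])
  finally show "(\<Sum>m. log_majorant d e n (Suc (m + n))) \<le> \<delta> * real n / (d - 1)" .
qed

lemma sum_log_majorant_le:
  fixes e :: "nat \<Rightarrow> real"
  assumes "d \<ge> 1 / 2" "\<And>k. 0 \<le> e k"
  shows "(\<Sum>m<n. log_majorant d e n (Suc m))
    \<le> 2 * d * sqrt (real n) * (\<Sum>m<n. e (Suc m) powr (1 / (2 * d)) / sqrt (real (Suc m)))"
proof -
  define s where "s = 1 / (2 * d)"
  have s: "0 < s" "s \<le> 1" "d * s = 1 / 2"
    using assms(1) by (auto simp: s_def)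
  have "log_majorant d e n (Suc m)
      \<le> 2 * d * sqrt (real n) * (e (Suc m) powr s / sqrt (real (Suc m)))" for m
  proof -
    have "log_majorant d e n (Suc m) \<le> (e (Suc m) * (real n / real (Suc m)) powr d) powr s / s"
      unfolding log_majorant_def using s assms(2) by (intro ln_one_plus_le_powr) auto
    also have "\<dots> = 2 * d * sqrt (real n) * (e (Suc m) powr s / sqrt (real (Suc m)))"
      using assms s
      by (simp add: powr_mult powr_divide powr_powr powr_half_sqrt s_def field_simps)
    finally show ?thesis .
  qed
  then show ?thesis
    unfolding s_def[symmetric] sum_distrib_left by (rule sum_mono)
qed

lemma sum_inverse_sqrt_weighted_le:
  fixes a :: "nat \<Rightarrow> real"
  assumes small: "\<And>m. m \<ge> M \<Longrightarrow> \<bar>a m\<bar> \<le> \<eta>" and bounded: "\<And>m. \<bar>a m\<bar> \<le> B"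
  shows "\<bar>\<Sum>m<n. a m / sqrt (real (Suc m))\<bar> \<le> 2 * \<eta> * sqrt (real n) + real M * B"
proof -
  have "0 \<le> \<eta>" "0 \<le> B"
    using small[of M] bounded[of 0] by auto
  have pointwise: "\<bar>a m / sqrt (real (Suc m))\<bar> \<le> \<eta> * (1 / sqrt (real (Suc m))) + (if m < M then B else 0)"
    for m
  proof (cases "m < M")
    case True
    have "\<bar>a m\<bar> * 1 \<le> \<bar>a m\<bar> * sqrt (real (Suc m))"
      by (intro mult_left_mono) auto
    then have "\<bar>a m\<bar> / sqrt (real (Suc m)) \<le> \<bar>a m\<bar>" by (simp add: divide_le_eq)
    moreover have "0 \<le> \<eta> * (1 / sqrt (real (Suc m)))" using \<open>0 \<le> \<eta>\<close> by simp
    ultimately show ?thesis using True bounded[of m] by (simp add: abs_divide)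
  next
    case False
    then have "\<bar>a m\<bar> / sqrt (real (Suc m)) \<le> \<eta> / sqrt (real (Suc m))"
      using small[of m] by (intro divide_right_mono) auto
    then show ?thesis using False by (simp add: abs_divide)
  qed
  have "\<bar>\<Sum>m<n. a m / sqrt (real (Suc m))\<bar> \<le> (\<Sum>m<n. \<bar>a m / sqrt (real (Suc m))\<bar>)"
    by (rule sum_abs)
  also have "\<dots> \<le> (\<Sum>m<n. \<eta> * (1 / sqrt (real (Suc m))) + (if m < M then B else 0))"
    by (rule sum_mono[OF pointwise])
  also have "\<dots> = \<eta> * (\<Sum>m<n. 1 / sqrt (real (Suc m))) + real (min n M) * B"
  proof -
    have "(\<Sum>m<k. if m < M then B else 0) = real (min k M) * B" for k
      by (induction k) (auto simp: min_def algebra_simps)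
    then show ?thesis by (simp add: sum.distrib sum_distrib_left)
  qed
  also have "\<dots> \<le> \<eta> * (2 * sqrt (real n)) + real M * B"
    using sum_inverse_sqrt_le[of n] \<open>0 \<le> \<eta>\<close> \<open>0 \<le> B\<close>
    by (intro add_mono mult_left_mono mult_right_mono) auto
  finally show ?thesis by simp
qed

lemma inverse_sqrt_weighted_average_tendsto_zero:
  fixes a :: "nat \<Rightarrow> real"
  assumes "a \<longlonglongrightarrow> 0"
  shows "(\<lambda>n. (\<Sum>m<n. a m / sqrt (real (Suc m))) / sqrt (real n)) \<longlonglongrightarrow> 0"
proof (rule LIMSEQ_I)
  fix \<epsilon> :: real
  assume "\<epsilon> > 0"
  obtain M where M: "\<And>m. m \<ge> M \<Longrightarrow> \<bar>a m\<bar> \<le> \<epsilon> / 4"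
    using LIMSEQ_D[OF assms, of "\<epsilon> / 4"] \<open>\<epsilon> > 0\<close> by (auto intro: less_imp_le)
  obtain B where B: "\<And>m. \<bar>a m\<bar> \<le> B"
    using convergent_imp_Bseq[OF convergentI[OF assms]] by (auto simp: Bseq_def)
  have "(\<lambda>n. real M * B / sqrt (real n)) \<longlonglongrightarrow> 0"
    by (intro tendsto_divide_0[OF tendsto_const] filterlim_at_top_imp_at_infinity
        filterlim_compose[OF sqrt_at_top filterlim_real_sequentially])
  then obtain N where N: "\<And>n. n \<ge> N \<Longrightarrow> \<bar>real M * B / sqrt (real n)\<bar> < \<epsilon> / 2"
    using LIMSEQ_D[of _ 0 "\<epsilon> / 2"] \<open>\<epsilon> > 0\<close> by fastforce
  have "\<bar>(\<Sum>m<n. a m / sqrt (real (Suc m))) / sqrt (real n)\<bar> < \<epsilon>" if "n \<ge> Suc N" for n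
  proof -
    have "\<bar>\<Sum>m<n. a m / sqrt (real (Suc m))\<bar> / sqrt (real n)
        \<le> (2 * (\<epsilon> / 4) * sqrt (real n) + real M * B) / sqrt (real n)"
      using sum_inverse_sqrt_weighted_le[where M=M and n=n, OF M B] by (rule divide_right_mono) simp_all
    also have "\<dots> = \<epsilon> / 2 + real M * B / sqrt (real n)"
      using that by (simp add: add_divide_distrib)
    also have "\<dots> < \<epsilon>" using N[of n] that by linarith
    finally show ?thesis by (simp add: abs_divide)
  qed
  then show "\<exists>N. \<forall>n\<ge>N. norm ((\<Sum>m<n. a m / sqrt (real (Suc m))) / sqrt (real n) - 0) < \<epsilon>"
    by auto
qed

lemma summable_log_majorant:
  fixes e :: "nat \<Rightarrow> real"
  assumes "d > 1" "n \<ge> 1" "\<And>k. 0 \<le> e k" "Bseq e"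
  shows "summable (\<lambda>m. log_majorant d e n (Suc m))"
proof -
  obtain B where "\<forall>k. norm (e k) \<le> B"
    using assms(4) by (auto simp: Bseq_def)
  then have "\<And>k. e k \<le> B"
    by (simp add: abs_le_iff)
  then have "summable (\<lambda>m. log_majorant d e n (Suc (m + n)))"
    using assms(1-3) by (intro summable_log_majorant_tail) auto
  then show ?thesis
    by (subst summable_iff_shift[where k=n, symmetric]) simp
qed

lemma average_log_majorant_tail_tendsto_zero:
  fixes e :: "nat \<Rightarrow> real"
  assumes "d > 1" "\<And>k. 0 \<le> e k" "e \<longlonglongrightarrow> 0"
  shows "(\<lambda>n. (\<Sum>m. log_majorant d e n (Suc (m + n))) / real n) \<longlonglongrightarrow> 0"
proof (rule LIMSEQ_I)
  fix \<epsilon> :: real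
  assume "\<epsilon> > 0"
  define \<delta> where "\<delta> = \<epsilon> * (d - 1) / 2"
  have "\<delta> > 0" using assms(1) \<open>\<epsilon> > 0\<close> by (simp add: \<delta>_def)
  then obtain M where M: "\<And>k. k \<ge> M \<Longrightarrow> e k \<le> \<delta>"
    using LIMSEQ_D[OF assms(3)] by (metis abs_less_iff diff_zero less_imp_le real_norm_def)
  have "\<bar>(\<Sum>m. log_majorant d e n (Suc (m + n))) / real n\<bar> < \<epsilon>" if "n \<ge> Suc M" for n
  proof -
    have n: "n \<ge> 1" using that by simp
    have e: "\<And>k. k > n \<Longrightarrow> 0 \<le> e k \<and> e k \<le> \<delta>" using M that assms(2) by auto
    have "0 \<le> (\<Sum>m. log_majorant d e n (Suc (m + n)))"
      by (intro suminf_nonneg summable_log_majorant_tail[OF assms(1) n e] log_majorant_nonneg assms(2))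
    moreover have "(\<Sum>m. log_majorant d e n (Suc (m + n))) \<le> \<delta> * real n / (d - 1)"
      by (rule suminf_log_majorant_tail_le[OF assms(1) n e])
    moreover have "\<delta> * real n / (d - 1) = \<epsilon> / 2 * real n"
      using assms(1) by (simp add: \<delta>_def field_simps)
    moreover have "0 < \<epsilon> * real n" using n \<open>\<epsilon> > 0\<close> by simp
    ultimately show ?thesis
      using n by (simp add: abs_of_nonneg pos_divide_less_eq)
  qed
  then show "\<exists>N. \<forall>n\<ge>N. norm ((\<Sum>m. log_majorant d e n (Suc (m + n))) / real n - 0) < \<epsilon>"
    by auto
qed

lemma average_log_majorant_head_tendsto_zero:
  fixes e :: "nat \<Rightarrow> real"
  assumes "d \<ge> 1 / 2" "\<And>k. 0 \<le> e k" "e \<longlonglongrightarrow> 0"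
  shows "(\<lambda>n. (\<Sum>m<n. log_majorant d e n (Suc m)) / real n) \<longlonglongrightarrow> 0"
proof -
  let ?a = "\<lambda>m. e (Suc m) powr (1 / (2 * d))"
  let ?bound = "\<lambda>n. 2 * d * ((\<Sum>m<n. ?a m / sqrt (real (Suc m))) / sqrt (real n))"
  have "?a \<longlonglongrightarrow> 0"
    using assms by (intro tendsto_zero_powrI LIMSEQ_Suc[OF assms(3)] tendsto_const) auto
  then have bound_tendsto: "?bound \<longlonglongrightarrow> 0"
    by (intro tendsto_mult_right_zero inverse_sqrt_weighted_average_tendsto_zero)
  have upper: "(\<Sum>m<n. log_majorant d e n (Suc m)) / real n \<le> ?bound n" for n
  proof (cases "n = 0")
    case False
    have "(\<Sum>m<n. log_majorant d e n (Suc m)) / real n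
        \<le> 2 * d * sqrt (real n) * (\<Sum>m<n. ?a m / sqrt (real (Suc m))) / real n"
      using sum_log_majorant_le[OF assms(1,2), where n=n] by (rule divide_right_mono) simp
    also have "\<dots> = 2 * d * sqrt (real n) * (\<Sum>m<n. ?a m / sqrt (real (Suc m)))
        / (sqrt (real n) * sqrt (real n))"
      by simp
    also have "\<dots> = ?bound n"
      using False by (simp add: divide_simps)
    finally show ?thesis .
  qed simp
  have lower: "0 \<le> (\<Sum>m<n. log_majorant d e n (Suc m)) / real n" for n
    using assms(2) by (intro divide_nonneg_nonneg sum_nonneg log_majorant_nonneg) simp_all
  show ?thesis
    by (rule tendsto_sandwich[OF always_eventually always_eventually tendsto_const bound_tendsto])
      (use lower upper in blast)+
qed

lemma average_log_majorant_tendsto_zero: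
  fixes e :: "nat \<Rightarrow> real"
  assumes "d > 1" "\<And>k. 0 \<le> e k" "e \<longlonglongrightarrow> 0"
  shows "(\<lambda>n. (\<Sum>m. log_majorant d e n (Suc m)) / real n) \<longlonglongrightarrow> 0"
proof -
  have bounded: "Bseq e"
    by (rule convergent_imp_Bseq[OF convergentI[OF assms(3)]])
  let ?tail = "\<lambda>n. (\<Sum>m. log_majorant d e n (Suc (m + n))) / real n"
  let ?head = "\<lambda>n. (\<Sum>m<n. log_majorant d e n (Suc m)) / real n"
  have "(\<lambda>n. ?tail n + ?head n) \<longlonglongrightarrow> 0 + 0"
    using average_log_majorant_tail_tendsto_zero[OF assms]
      average_log_majorant_head_tendsto_zero[OF _ assms(2,3)] assms(1)
    by (intro tendsto_add) simp_all
  then have limit: "(\<lambda>n. ?tail n + ?head n) \<longlonglongrightarrow> 0"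
    by simp
  have split: "?tail n + ?head n = (\<Sum>m. log_majorant d e n (Suc m)) / real n" if "n \<ge> 1" for n
    using suminf_split_initial_segment[OF summable_log_majorant[OF assms(1) that assms(2) bounded], where k=n]
    by (simp add: add_divide_distrib)
  show ?thesis
    by (rule Lim_transform_eventually[OF limit eventually_sequentiallyI[OF split]])
qed

lemma norm_divide_seq_a:
  assumes "k \<ge> 1"
  shows "cmod (z / complex_of_real (seq_a d n)) = cmod z * real k powr d * (real n / real k) powr d"
proof -
  have "z / complex_of_real (seq_a d n) = z * complex_of_real (real n powr d)"
    by (simp add: seq_a_def)
  moreover have "real k powr d * (real n / real k) powr d = real n powr d"
    using assms by (simp add: powr_divide)
  ultimately show ?thesis
    by (simp add: norm_mult)
qed

lemma ln_norm_one_minus_divide_seq_a_nonneg: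
  assumes "Re z \<le> 0"
  shows "0 \<le> ln (cmod (1 - z / complex_of_real (seq_a d n)))"
  using assms by (intro ln_norm_one_minus_nonneg) (simp add: Re_divide_of_real seq_a_def mult_nonpos_nonneg)

lemma ln_norm_one_minus_divide_seq_a_le:
  assumes "Re z \<le> 0" "k \<ge> 1"
  shows "ln (cmod (1 - z / complex_of_real (seq_a d n)))
    \<le> ln (1 + cmod z * real k powr d * (real n / real k) powr d)"
  unfolding norm_divide_seq_a[OF assms(2), symmetric] using assms(1)
  by (intro ln_norm_one_minus_le) (simp add: Re_divide_of_real seq_a_def mult_nonpos_nonneg)

lemma beta_le_average_log_majorant:
  fixes d :: real and lam :: "nat \<Rightarrow> complex"
  defines "e \<equiv> \<lambda>k. cmod (lam k) * real k powr d"
  assumes "d > 1" "n \<ge> 1" "\<And>k. k \<ge> 1 \<Longrightarrow> Re (lam k) \<le> 0" "Bseq e"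
  shows "0 \<le> beta d lam n" "beta d lam n \<le> (\<Sum>m. log_majorant d e n (Suc m)) / real n"
proof -
  define t where "t m = ln (cmod (1 - lam (Suc m) / complex_of_real (seq_a d n)))" for m
  have t_nonneg: "0 \<le> t m" for m
    unfolding t_def by (rule ln_norm_one_minus_divide_seq_a_nonneg[OF assms(4)]) simp
  have t_le: "t m \<le> log_majorant d e n (Suc m)" for m
    unfolding t_def log_majorant_def e_def
    by (rule ln_norm_one_minus_divide_seq_a_le[OF assms(4)]) simp_all
  have summable: "summable (\<lambda>m. log_majorant d e n (Suc m))"
    by (rule summable_log_majorant[OF assms(2,3) _ assms(5)]) (simp add: e_def)
  have "summable t"
    by (rule summable_comparison_test'[OF summable, of 0]) (simp add: t_nonneg t_le)
  then have "0 \<le> suminf t" "suminf t \<le> (\<Sum>m. log_majorant d e n (Suc m))"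
    using summable t_nonneg t_le by (auto intro: suminf_nonneg suminf_le)
  moreover have "beta d lam n = suminf t / real n"
    by (simp add: beta_def t_def[abs_def])
  ultimately show "0 \<le> beta d lam n" "beta d lam n \<le> (\<Sum>m. log_majorant d e n (Suc m)) / real n"
    using divide_right_mono[of "suminf t" "\<Sum>m. log_majorant d e n (Suc m)" "real n"] by simp_all
qed

theorem proposition3:
  fixes d :: real and lam :: "nat \<Rightarrow> complex"
  assumes "d > 1"
    and "\<And>n. n \<ge> 1 \<Longrightarrow> Re (lam n) \<le> 0"
    and "(\<lambda>n. lam n / complex_of_real (seq_a d n)) \<longlonglongrightarrow> 0"
  shows "(\<lambda>n. beta d lam n) \<longlonglongrightarrow> 0"
proof -
  define e where "e = (\<lambda>k. cmod (lam k) * real k powr d)"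
  have e_nonneg: "\<And>k. 0 \<le> e k"
    by (simp add: e_def)
  have "cmod (lam k / complex_of_real (seq_a d k)) = e k" if "k \<ge> 1" for k
    using norm_divide_seq_a[OF that] that by (simp add: e_def)
  then have e_tendsto: "e \<longlonglongrightarrow> 0"
    by (intro Lim_transform_eventually[OF tendsto_norm_zero[OF assms(3)]] eventually_sequentiallyI)
  have "Bseq e"
    by (rule convergent_imp_Bseq[OF convergentI[OF e_tendsto]])
  then have beta_bounds:
      "0 \<le> beta d lam n" "beta d lam n \<le> (\<Sum>m. log_majorant d e n (Suc m)) / real n"
    if "n \<ge> 1" for n
    using beta_le_average_log_majorant[where d=d and lam=lam and n=n, OF assms(1) that assms(2)]
    unfolding e_def by blast+
  have lower: "\<forall>\<^sub>F n in sequentially. 0 \<le> beta d lam n"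
    and upper: "\<forall>\<^sub>F n in sequentially. beta d lam n \<le> (\<Sum>m. log_majorant d e n (Suc m)) / real n"
    using beta_bounds by (blast intro: eventually_sequentiallyI)+
  show ?thesis
    by (rule tendsto_sandwich[OF lower upper tendsto_const
          average_log_majorant_tendsto_zero[OF assms(1) e_nonneg e_tendsto]])
qed

end
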